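(* For any $\epsilon_{\mathrm{sim}}\le1/2$, there exist episodic MDPs $\mathcal{M}^{\mathsf{sim}},\mathcal{M}^{\mathsf{real},1},\mathcal{M}^{\mathsf{real},2}$ (sharing state space, finite action set, rewards, initial state and horizon) and a finite function class $\mathcal{F}$ such that: 1. Each of $\mathcal{M}^{\mathsf{real},1},\mathcal{M}^{\mathsf{real},2}$ satisfies $\|P^{\mathsf{real},i}_h(\cdot\mid s,a)-P^{\mathsf{sim}}_h(\cdot\mid s,a)\|_{\mathrm{TV}}\le\epsilon_{\mathrm{sim}}$ for all $(s,a,h)$; $\mathcal{M}^{\mathsf{sim}}$ and both real MDPs are low-rank MDPs of common dimension $d$; $\mathcal{M}^{\mathsf{sim}}$ satisfies reachability with some $\lambda_{\min}^\star>0$; and $\mathcal{F}$ is Bellman complete with respect to $\mathcal{M}^{\mathsf{sim}}$ and each real MDP. 2. There exists a policy $\pi_{\mathrm{exp}}$ such that $\lambda_{\min}(\mathbb{E}^{\mathcal{M}^{\mathsf{sim}},\pi_{\mathrm{exp}}}[\boldsymbol{\phi}^{\mathsf{s}}(s_h,a_h)\boldsymbol{\phi}^{\mathsf{s}}(s_h,a_h)^\top])=1/2$ for all $h\in[H]$, and for any $T\ge0$, if $\pi_{\mathrm{exp}}$ is played on the real MDP for $T$ steps (episodes), $$\inf_{\widehat{\pi}}\ \sup_{\mathcal{M}\in\{\mathcal{M}^{\mathsf{real},1},\mathcal{M}^{\mathsf{real},2}\}}\mathbb{E}^{\mathcal{M},\pi_{\mathrm{exp}}}\big[V_0^{\mathcal{M},\star}-V_0^{\mathcal{M},\widehat{\pi}}\big]\ge\epsilon_{\mathrm{sim}},$$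 where the infimum is over all rules mapping the collected data to a policy $\widehat{\pi}$.
   Context: Episodic MDP $(\mathcal{S},\mathcal{A},\{P_h\}_{h=1}^H,\{r_h\},s_1,H)$ with finite $\mathcal{A}$ and deterministic rewards in $[0,1]$; $V_0^{\mathcal{M},\pi}$ is the expected total reward of $\pi$ from $s_1$, $V_0^{\mathcal{M},\star}=\sup_\pi V_0^{\mathcal{M},\pi}$; $\mathbb{E}^{\mathcal{M},\pi}$ is expectation when playing $\pi$ on $\mathcal{M}$. Low-rank MDP of dimension $d$: $P_h(\cdot\mid s,a)=\langle\boldsymbol{\phi}(s,a),\boldsymbol{\mu}_h(\cdot)\rangle$ with $\|\boldsymbol{\phi}\|_2\le1$, $\|\int|\mathrm{d}\boldsymbol{\mu}_h|\|_2\le\sqrt d$; $\boldsymbol{\phi}^{\mathsf{s}}$ denotes the features of $\mathcal{M}^{\mathsf{sim}}$. Reachability: $\min_h\sup_\pi\lambda_{\min}(\mathbb{E}^{\mathcal{M}^{\mathsf{sim}},\pi}[\boldsymbol{\phi}^{\mathsf{s}}\boldsymbol{\phi}^{\mathsf{s}\top}])\ge\lambda_{\min}^\star$. $\mathcal{F}=\prod_h\mathcal{F}_h$, $\mathcal{F}_h\subseteq\{\mathcal{S}\times\mathcal{A}\to[0,H]\}$, $f_{H+1}=0$; $\mathcal{T}f_{h+1}(s,a)=r_h(s,a)+\mathbb{E}_{s'\sim P_h(\cdot|s,a)}\max_{a'}f_{h+1}(s',a')$; Bellman complete: $\mathcal{T}f_{h+1}\in\mathcal{F}_h$ for all $f_{h+1}\in\mathcal{F}_{h+1}$.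 *)

theory Defs
  imports "HOL-Probability.Probability" "Jordan_Normal_Form.Char_Poly"
begin

text \<open>States are natural numbers (a countable state space), actions are
natural numbers drawn from a finite nonempty action set A, steps are h = 1..H.
A transition kernel is P :: nat => nat => nat => nat pmf, with P h s a the law of
the next state. A (Markov, possibly randomized)
policy is pi :: nat => nat => nat pmf, pi h s being the law of the action at step h.\<close>

type_synonym kernel = "nat \<Rightarrow> nat \<Rightarrow> nat \<Rightarrow> nat pmf"
type_synonym reward = "nat \<Rightarrow> nat \<Rightarrow> nat \<Rightarrow> real"
type_synonym policy = "nat \<Rightarrow> nat \<Rightarrow> nat pmf"

definition policies :: "nat set \<Rightarrow> policy set" where
  "policies A = {\<pi>. \<forall>h s. set_pmf (\<pi> h s) \<subseteq> A}"

text \<open>Value to go: polval P r pi k h s is the expected reward collected in the k steps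
h, h+1, ..., h+k-1 starting from state s at step h.\<close>
fun polval :: "kernel \<Rightarrow> reward \<Rightarrow> policy \<Rightarrow> nat \<Rightarrow> nat \<Rightarrow> nat \<Rightarrow> real" where
  "polval P r \<pi> 0 h s = 0"
| "polval P r \<pi> (Suc k) h s =
     measure_pmf.expectation (\<pi> h s)
       (\<lambda>a. r h s a + measure_pmf.expectation (P h s a) (\<lambda>s'. polval P r \<pi> k (Suc h) s'))"

definition V0 :: "kernel \<Rightarrow> reward \<Rightarrow> nat \<Rightarrow> nat \<Rightarrow> policy \<Rightarrow> real" where
  "V0 P r s1 H \<pi> = polval P r \<pi> H 1 s1"

definition V0_star :: "kernel \<Rightarrow> reward \<Rightarrow> nat set \<Rightarrow> nat \<Rightarrow> nat \<Rightarrow> real" where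
  "V0_star P r A s1 H = (SUP \<pi>\<in>policies A. V0 P r s1 H \<pi>)"

fun state_dist :: "kernel \<Rightarrow> policy \<Rightarrow> nat \<Rightarrow> nat \<Rightarrow> nat pmf"
and sa_dist :: "kernel \<Rightarrow> policy \<Rightarrow> nat \<Rightarrow> nat \<Rightarrow> (nat \<times> nat) pmf" where
  "state_dist P \<pi> s1 0 = return_pmf s1"
| "state_dist P \<pi> s1 (Suc 0) = return_pmf s1"
| "state_dist P \<pi> s1 (Suc (Suc h)) =
     bind_pmf (sa_dist P \<pi> s1 (Suc h)) (\<lambda>(s, a). P (Suc h) s a)"
| "sa_dist P \<pi> s1 h =
     bind_pmf (state_dist P \<pi> s1 h) (\<lambda>s. map_pmf (\<lambda>a. (s, a)) (\<pi> h s))"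

fun traj :: "kernel \<Rightarrow> policy \<Rightarrow> nat \<Rightarrow> nat \<Rightarrow> nat \<Rightarrow> (nat \<times> nat) list pmf" where
  "traj P \<pi> 0 h s = return_pmf []"
| "traj P \<pi> (Suc k) h s =
     bind_pmf (\<pi> h s) (\<lambda>a. bind_pmf (P h s a) (\<lambda>s'.
       map_pmf (\<lambda>rest. (s, a) # rest) (traj P \<pi> k (Suc h) s')))"

fun dataset :: "kernel \<Rightarrow> policy \<Rightarrow> nat \<Rightarrow> nat \<Rightarrow> nat \<Rightarrow> (nat \<times> nat) list list pmf" where
  "dataset P \<pi> s1 H 0 = return_pmf []"
| "dataset P \<pi> s1 H (Suc T) =
     bind_pmf (traj P \<pi> H 1 s1) (\<lambda>\<tau>. map_pmf (\<lambda>D. \<tau> # D) (dataset P \<pi> s1 H T))"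

definition tv_dist :: "'a pmf \<Rightarrow> 'a pmf \<Rightarrow> real" where
  "tv_dist p q = (SUP X. \<bar>measure_pmf.prob p X - measure_pmf.prob q X\<bar>)"

text \<open>Low-rank MDP of dimension d with features phi and (signed) measures mu_h,
vectors in R^d being represented by their coordinates i < d.\<close>
definition low_rank :: "kernel \<Rightarrow> nat set \<Rightarrow> nat \<Rightarrow> nat \<Rightarrow>
    (nat \<Rightarrow> nat \<Rightarrow> nat \<Rightarrow> real) \<Rightarrow> (nat \<Rightarrow> nat \<Rightarrow> nat \<Rightarrow> real) \<Rightarrow> bool" where
  "low_rank P A H d \<phi> \<mu> \<longleftrightarrow>
     (\<forall>s. \<forall>a\<in>A. sqrt (\<Sum>i<d. (\<phi> s a i)\<^sup>2) \<le> 1) \<and>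
     (\<forall>h\<in>{1..H}. \<forall>i<d. (\<lambda>s'. \<bar>\<mu> h s' i\<bar>) summable_on UNIV) \<and>
     (\<forall>h\<in>{1..H}. sqrt (\<Sum>i<d. (\<Sum>\<^sub>\<infinity>s'. \<bar>\<mu> h s' i\<bar>)\<^sup>2) \<le> sqrt (real d)) \<and>
     (\<forall>h\<in>{1..H}. \<forall>s. \<forall>a\<in>A. \<forall>s'. pmf (P h s a) s' = (\<Sum>i<d. \<phi> s a i * \<mu> h s' i))"

definition is_low_rank_mdp :: "kernel \<Rightarrow> nat set \<Rightarrow> nat \<Rightarrow> nat \<Rightarrow> bool" where
  "is_low_rank_mdp P A H d \<longleftrightarrow> (\<exists>\<phi> \<mu>. low_rank P A H d \<phi> \<mu>)"

definition feat_cov :: "kernel \<Rightarrow> nat \<Rightarrow> nat \<Rightarrow> (nat \<Rightarrow> nat \<Rightarrow> nat \<Rightarrow> real) \<Rightarrow>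
    policy \<Rightarrow> nat \<Rightarrow> real mat" where
  "feat_cov P s1 d \<phi> \<pi> h = mat d d (\<lambda>(i, j).
     measure_pmf.expectation (sa_dist P \<pi> s1 h) (\<lambda>(s, a). \<phi> s a i * \<phi> s a j))"

definition lambda_min :: "real mat \<Rightarrow> real" where
  "lambda_min M = Min {k. eigenvalue M k}"

text \<open>Bellman operator and Bellman completeness of F = prod_h F_h, F_h a class of
functions S x A -> [0,H] (functions compared on S x A only), with f_{H+1} = 0.\<close>
definition bellman_op :: "kernel \<Rightarrow> reward \<Rightarrow> nat set \<Rightarrow> nat \<Rightarrow>
    (nat \<Rightarrow> nat \<Rightarrow> real) \<Rightarrow> nat \<Rightarrow> nat \<Rightarrow> real" where
  "bellman_op P r A h g s a =
     r h s a + measure_pmf.expectation (P h s a) (\<lambda>s'. Max ((\<lambda>a'. g s' a') ` A))"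

definition fclass_at :: "(nat \<Rightarrow> (nat \<Rightarrow> nat \<Rightarrow> real) set) \<Rightarrow> nat \<Rightarrow> nat \<Rightarrow> (nat \<Rightarrow> nat \<Rightarrow> real) set" where
  "fclass_at F H h = (if h = H + 1 then {\<lambda>s a. 0} else F h)"

definition bellman_complete :: "kernel \<Rightarrow> reward \<Rightarrow> nat set \<Rightarrow> nat \<Rightarrow>
    (nat \<Rightarrow> (nat \<Rightarrow> nat \<Rightarrow> real) set) \<Rightarrow> bool" where
  "bellman_complete P r A H F \<longleftrightarrow>
     (\<forall>h\<in>{1..H}. \<forall>g\<in>fclass_at F H (h + 1).
        \<exists>f\<in>F h. \<forall>s. \<forall>a\<in>A. f s a = bellman_op P r A h g s a)"

definition valid_fclass :: "nat set \<Rightarrow> nat \<Rightarrow> (nat \<Rightarrow> (nat \<Rightarrow> nat \<Rightarrow> real) set) \<Rightarrow> bool" where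
  "valid_fclass A H F \<longleftrightarrow>
     (\<forall>h\<in>{1..H}. finite (F h) \<and> (\<forall>f\<in>F h. \<forall>s. \<forall>a\<in>A. 0 \<le> f s a \<and> f s a \<le> real H))"

end

theory Submission
  imports Defs
begin

text \<open>The hard instance is a two-armed bandit embedded in a horizon-2 MDP. From the start
state, action a reaches the rewarding state 1 with probability 1/2 + x, 1/2 - x or 1/2
according as a = 2, a = 3 or a is one of the uninformative actions 0, 1; the simulator has
x = 0 and the two real MDPs have x = \<epsilon> and x = -\<epsilon>. The exploration policy plays 0 and 1
uniformly: on the simulator's parity features this gives covariance diag(1/2, 1/2), but the
two real kernels agree on these actions, so the collected data has the same law under both.
Since the values of a fixed policy on the two real MDPs sum to 1 while each optimal value is
at least 1/2 + \<epsilon>, the two expected regrets of any learning rule sum to at least 2\<epsilon>.\<close>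

lemma integrable_measure_pmf_bounded:
  fixes f :: "'a \<Rightarrow> real"
  assumes "\<And>x. \<bar>f x\<bar> \<le> B"
  shows "integrable (measure_pmf p) f"
  by (rule measure_pmf.integrable_const_bound[where B = B]) (use assms in auto)

lemma summable_on_pmf: "pmf p summable_on A"
  using pmf_abs_summable[of p A] unfolding abs_summable_equivalent[symmetric] by simp

lemma infsum_pmf: "infsum (pmf p) UNIV = 1"
  using infsetsum_infsum[OF pmf_abs_summable, of p UNIV] infsetsum_pmf_eq_1[of p UNIV] by simp

lemma polval_0_fun: "polval P r \<pi> 0 h = (\<lambda>_. 0)"
  by (rule ext) simp

lemma polval_bounds:
  assumes "\<And>h s a. 0 \<le> r h s a \<and> r h s a \<le> 1"
  shows "0 \<le> polval P r \<pi> k h s \<and> polval P r \<pi> k h s \<le> real k"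
proof (induction k arbitrary: h s)
  case 0
  then show ?case by simp
next
  case (Suc k)
  let ?future = "\<lambda>a. measure_pmf.expectation (P h s a) (\<lambda>s'. polval P r \<pi> k (Suc h) s')"
  have integrable_future: "integrable (measure_pmf (P h s a)) (\<lambda>s'. polval P r \<pi> k (Suc h) s')" for a
    using Suc.IH by (intro integrable_measure_pmf_bounded[where B = k]) (simp add: abs_le_iff)
  have future: "0 \<le> ?future a \<and> ?future a \<le> k" for a
    using Suc.IH integrable_future
    by (auto intro!: measure_pmf.integral_ge_const measure_pmf.integral_le_const)
  have step: "0 \<le> r h s a + ?future a \<and> r h s a + ?future a \<le> Suc k" for a
    using assms[of h s a] future[of a] by auto
  have integrable_step: "integrable (measure_pmf (\<pi> h s)) (\<lambda>a. r h s a + ?future a)"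
    using step by (intro integrable_measure_pmf_bounded[where B = "Suc k"]) (simp add: abs_le_iff)
  have "0 \<le> measure_pmf.expectation (\<pi> h s) (\<lambda>a. r h s a + ?future a)"
    using step integrable_step by (intro measure_pmf.integral_ge_const) auto
  moreover have "measure_pmf.expectation (\<pi> h s) (\<lambda>a. r h s a + ?future a) \<le> Suc k"
    using step integrable_step by (intro measure_pmf.integral_le_const) auto
  ultimately show ?case by simp
qed

lemma V0_le_V0_star:
  assumes "\<And>h s a. 0 \<le> r h s a \<and> r h s a \<le> 1" and "\<pi> \<in> policies A"
  shows "V0 P r s1 H \<pi> \<le> V0_star P r A s1 H"
  unfolding V0_star_def using assms(2) polval_bounds[OF assms(1)]
  by (intro cSUP_upper bdd_aboveI[where M = "real H"]) (auto simp: V0_def)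

lemma traj_cong_on_policy_support:
  assumes "\<And>h s a. a \<in> set_pmf (\<pi> h s) \<Longrightarrow> P h s a = Q h s a"
  shows "traj P \<pi> k h s = traj Q \<pi> k h s"
  using assms by (induction k arbitrary: h s) (auto intro!: bind_pmf_cong)

lemma dataset_cong_on_policy_support:
  assumes "\<And>h s a. a \<in> set_pmf (\<pi> h s) \<Longrightarrow> P h s a = Q h s a"
  shows "dataset P \<pi> s1 H T = dataset Q \<pi> s1 H T"
  by (induction T) (simp_all add: traj_cong_on_policy_support[OF assms])

lemma max_expectation_ge_of_sum_ge:
  fixes f g :: "'a \<Rightarrow> real"
  assumes "\<And>x. 2 * c \<le> f x + g x" and "\<And>x. \<bar>f x\<bar> \<le> B\<^sub>f" and "\<And>x. \<bar>g x\<bar> \<le> B\<^sub>g"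
  shows "c \<le> max (measure_pmf.expectation p f) (measure_pmf.expectation p g)"
proof -
  have f: "integrable (measure_pmf p) f" and g: "integrable (measure_pmf p) g"
    using assms(2,3) by (auto intro: integrable_measure_pmf_bounded)
  have "2 * c \<le> measure_pmf.expectation p (\<lambda>x. f x + g x)"
    using assms(1) f g by (intro measure_pmf.integral_ge_const) auto
  also have "\<dots> = measure_pmf.expectation p f + measure_pmf.expectation p g"
    using f g by (rule Bochner_Integration.integral_add)
  finally show ?thesis by linarith
qed

lemma sum_lessThan_2: "(\<Sum>i<2. f i) = f 0 + f (1 :: nat)"
  by (simp add: numeral_2_eq_2)

lemma low_rank_of_pmf_factors:
  assumes "\<And>s a. a \<in> A \<Longrightarrow> (\<Sum>i<d. (\<phi> s a i)\<^sup>2) \<le> 1"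
    and "\<And>h s a s'. h \<in> {1..H} \<Longrightarrow> a \<in> A \<Longrightarrow> pmf (P h s a) s' = (\<Sum>i<d. \<phi> s a i * pmf (q h i) s')"
  shows "low_rank P A H d \<phi> (\<lambda>h s' i. pmf (q h i) s')"
  using assms unfolding low_rank_def by (simp add: summable_on_pmf infsum_pmf)

lemma eigenvalue_upper_triangular_iff:
  fixes A :: "'a :: field mat"
  assumes "A \<in> carrier_mat n n" and "upper_triangular A"
  shows "eigenvalue A k \<longleftrightarrow> k \<in> set (diag_mat A)"
  unfolding eigenvalue_root_char_poly[OF assms(1)] char_poly_upper_triangular[OF assms]
  by (simp add: poly_prod_list prod_list_zero_iff o_def) force

lemma lambda_min_diagonal:
  assumes "0 < n"
  shows "lambda_min (mat n n (\<lambda>(i, j). if i = j then p i else 0)) = Min (p ` {..<n})"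
proof -
  let ?M = "mat n n (\<lambda>(i, j). if i = j then p i else 0)"
  have "upper_triangular ?M" by auto
  then have "{k. eigenvalue ?M k} = set (diag_mat ?M)"
    using eigenvalue_upper_triangular_iff[of ?M n] by auto
  also have "\<dots> = p ` {..<n}"
    by (auto simp: diag_mat_def)
  finally show ?thesis by (simp add: lambda_min_def)
qed

lemma feat_cov_one_hot:
  "feat_cov P s1 d (\<lambda>s a i. if i = k s a then 1 else 0) \<pi> h =
   mat d d (\<lambda>(i, j). if i = j then measure_pmf.prob (sa_dist P \<pi> s1 h) {(s, a). k s a = i} else 0)"
  (is "_ = ?D")
proof (rule eq_matI)
  fix i j assume ij: "i < dim_row ?D" "j < dim_col ?D"
  have "(\<lambda>(s, a). (if i = k s a then 1 else 0) * (if j = k s a then 1 else 0 :: real)) =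
      (if i = j then indicator {(s, a). k s a = i} else (\<lambda>_. 0))"
    by (auto simp: fun_eq_iff indicator_def)
  with ij show "feat_cov P s1 d (\<lambda>s a i. if i = k s a then 1 else 0) \<pi> h $$ (i, j) = ?D $$ (i, j)"
    unfolding feat_cov_def by (simp only: index_mat dim_row_mat dim_col_mat case_prod_conv) simp
qed (simp_all add: feat_cov_def)

definition coin_pmf :: "real \<Rightarrow> nat pmf" where
  "coin_pmf p = map_pmf (\<lambda>b. if b then 1 else 2) (bernoulli_pmf p)"

lemma pmf_coin_pmf:
  assumes "0 \<le> p" and "p \<le> 1"
  shows "pmf (coin_pmf p) s = (if s = 1 then p else if s = 2 then 1 - p else 0)"
  using assms by (simp add: coin_pmf_def map_pmf_def pmf_bind)

lemma prob_coin_pmf: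
  assumes "0 \<le> p" and "p \<le> 1"
  shows "measure_pmf.prob (coin_pmf p) X = indicator X 1 * p + indicator X 2 * (1 - p)"
proof -
  have "measure_pmf.prob (coin_pmf p) X = measure_pmf.expectation (coin_pmf p) (indicator X)"
    by simp
  also have "\<dots> = measure_pmf.expectation (bernoulli_pmf p) (\<lambda>b. indicator X (if b then 1 else 2 :: nat))"
    unfolding coin_pmf_def by (rule integral_map_pmf)
  also have "\<dots> = indicator X 1 * p + indicator X 2 * (1 - p)"
    using assms by (simp add: mult.commute)
  finally show ?thesis .
qed

lemma tv_dist_coin_pmf_le:
  assumes "0 \<le> p" "p \<le> 1" "0 \<le> q" "q \<le> 1"
  shows "tv_dist (coin_pmf p) (coin_pmf q) \<le> \<bar>p - q\<bar>"
  unfolding tv_dist_def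
proof (rule cSUP_least)
  show "\<bar>measure_pmf.prob (coin_pmf p) X - measure_pmf.prob (coin_pmf q) X\<bar> \<le> \<bar>p - q\<bar>" for X
    using assms by (simp add: prob_coin_pmf indicator_def abs_minus_commute)
qed simp

definition arm_prob :: "real \<Rightarrow> nat \<Rightarrow> real" where
  "arm_prob x a = (if a = 2 then 1/2 + x else if a = 3 then 1/2 - x else 1/2)"

lemma arm_prob_bounds: "\<bar>x\<bar> \<le> 1/2 \<Longrightarrow> 0 \<le> arm_prob x a \<and> arm_prob x a \<le> 1"
  unfolding arm_prob_def by auto

definition bandit_kernel :: "real \<Rightarrow> kernel" where
  "bandit_kernel x h s a = coin_pmf (arm_prob x a)"

definition bandit_reward :: reward where
  "bandit_reward h s a = (if h = 2 \<and> s = 1 then 1 else 0)"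

definition explore_policy :: policy where
  "explore_policy h s = pmf_of_set {0, 1}"

lemma bandit_reward_bounds: "0 \<le> bandit_reward h s a \<and> bandit_reward h s a \<le> 1"
  by (simp add: bandit_reward_def)

lemma tv_dist_bandit_kernel_le:
  assumes "\<bar>x\<bar> \<le> 1/2"
  shows "tv_dist (bandit_kernel x h s a) (bandit_kernel 0 h s a) \<le> \<bar>x\<bar>"
  unfolding bandit_kernel_def using arm_prob_bounds[OF assms, of a] arm_prob_bounds[of 0 a]
  by (intro order_trans[OF tv_dist_coin_pmf_le]) (auto simp: arm_prob_def)

lemma bandit_kernel_hit_prob:
  assumes "\<bar>x\<bar> \<le> 1/2"
  shows "measure_pmf.prob (bandit_kernel x h s a) {1} = arm_prob x a"
  using arm_prob_bounds[OF assms] by (simp add: bandit_kernel_def measure_pmf_single pmf_coin_pmf)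

lemma V0_bandit:
  assumes "\<bar>x\<bar> \<le> 1/2"
  shows "V0 (bandit_kernel x) bandit_reward 0 2 \<pi> = measure_pmf.expectation (\<pi> 1 0) (arm_prob x)"
proof -
  have last_step: "polval (bandit_kernel x) bandit_reward \<pi> (Suc 0) (Suc (Suc 0)) = indicator {1}"
    by (simp add: fun_eq_iff bandit_reward_def polval_0_fun)
  show ?thesis
    unfolding V0_def numeral_2_eq_2
    using bandit_kernel_hit_prob[OF assms] by (simp add: last_step bandit_reward_def del: measure_pmf_single)
qed

lemma V0_bandit_mirror_sum:
  assumes "\<bar>x\<bar> \<le> 1/2"
  shows "V0 (bandit_kernel x) bandit_reward 0 2 \<pi> + V0 (bandit_kernel (-x)) bandit_reward 0 2 \<pi> = 1"
proof -
  have integrable: "integrable (measure_pmf (\<pi> 1 0)) (arm_prob y)" if "\<bar>y\<bar> \<le> 1/2" for y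
    using arm_prob_bounds[OF that] by (intro integrable_measure_pmf_bounded[where B = 1]) simp
  have "V0 (bandit_kernel x) bandit_reward 0 2 \<pi> + V0 (bandit_kernel (-x)) bandit_reward 0 2 \<pi> =
      measure_pmf.expectation (\<pi> 1 0) (arm_prob x) + measure_pmf.expectation (\<pi> 1 0) (arm_prob (-x))"
    using assms by (simp add: V0_bandit)
  also have "\<dots> = measure_pmf.expectation (\<pi> 1 0) (\<lambda>a. arm_prob x a + arm_prob (-x) a)"
    using integrable[of x] integrable[of "-x"] assms by (simp add: Bochner_Integration.integral_add)
  also have "(\<lambda>a. arm_prob x a + arm_prob (-x) a) = (\<lambda>_. 1)"
    by (auto simp: fun_eq_iff arm_prob_def)
  finally show ?thesis by simp
qed

lemma V0_star_bandit_ge: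
  assumes "\<bar>x\<bar> \<le> 1/2"
  shows "1/2 + \<bar>x\<bar> \<le> V0_star (bandit_kernel x) bandit_reward {0, 1, 2, 3} 0 2"
proof -
  define best_arm :: nat where "best_arm = (if 0 \<le> x then 2 else 3)"
  have "1/2 + \<bar>x\<bar> = V0 (bandit_kernel x) bandit_reward 0 2 (\<lambda>_ _. return_pmf best_arm)"
    using assms by (auto simp: V0_bandit arm_prob_def best_arm_def)
  also have "\<dots> \<le> V0_star (bandit_kernel x) bandit_reward {0, 1, 2, 3} 0 2"
    by (rule V0_le_V0_star) (auto simp: bandit_reward_bounds policies_def best_arm_def)
  finally show ?thesis .
qed

lemma dataset_bandit_explore:
  "dataset (bandit_kernel x) explore_policy s1 H T = dataset (bandit_kernel y) explore_policy s1 H T"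
  by (rule dataset_cong_on_policy_support) (auto simp: explore_policy_def bandit_kernel_def arm_prob_def)

lemma bandit_regret_lower_bound:
  assumes "0 \<le> \<epsilon>" and "\<epsilon> \<le> 1/2" and "\<forall>D. rule D \<in> policies {0, 1, 2, 3}"
  shows "\<epsilon> \<le> max
    (measure_pmf.expectation (dataset (bandit_kernel \<epsilon>) explore_policy 0 2 T)
      (\<lambda>D. V0_star (bandit_kernel \<epsilon>) bandit_reward {0, 1, 2, 3} 0 2 -
           V0 (bandit_kernel \<epsilon>) bandit_reward 0 2 (rule D)))
    (measure_pmf.expectation (dataset (bandit_kernel (-\<epsilon>)) explore_policy 0 2 T)
      (\<lambda>D. V0_star (bandit_kernel (-\<epsilon>)) bandit_reward {0, 1, 2, 3} 0 2 -
           V0 (bandit_kernel (-\<epsilon>)) bandit_reward 0 2 (rule D)))"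
proof -
  let ?V = "\<lambda>x \<pi>. V0 (bandit_kernel x) bandit_reward 0 2 \<pi>"
  let ?V_star = "\<lambda>x. V0_star (bandit_kernel x) bandit_reward {0, 1, 2, 3} 0 2"
  have eps: "\<bar>\<epsilon>\<bar> \<le> 1/2" "\<bar>-\<epsilon>\<bar> \<le> 1/2"
    using assms by auto
  have value_bounds: "0 \<le> ?V x \<pi> \<and> ?V x \<pi> \<le> 2" for x \<pi>
    using polval_bounds[of bandit_reward "bandit_kernel x" \<pi> 2 1 0] bandit_reward_bounds
    by (simp add: V0_def)
  have regret_bounded: "\<bar>?V_star x - ?V x \<pi>\<bar> \<le> \<bar>?V_star x\<bar> + 2" for x \<pi>
    using value_bounds[of x \<pi>] by (simp add: abs_le_iff abs_if)
  have "1/2 + \<epsilon> \<le> ?V_star \<epsilon>" and "1/2 + \<epsilon> \<le> ?V_star (-\<epsilon>)"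
    using V0_star_bandit_ge[OF eps(1)] V0_star_bandit_ge[OF eps(2)] assms(1) by auto
  then have "2 * \<epsilon> \<le> (?V_star \<epsilon> - ?V \<epsilon> (rule D)) + (?V_star (-\<epsilon>) - ?V (-\<epsilon>) (rule D))" for D
    using V0_bandit_mirror_sum[OF eps(1), of "rule D"] by linarith
  then show ?thesis
    unfolding dataset_bandit_explore[of "-\<epsilon>" _ _ _ \<epsilon>]
    by (rule max_expectation_ge_of_sum_ge[OF _ regret_bounded regret_bounded])
qed

definition parity_feature :: "nat \<Rightarrow> nat \<Rightarrow> nat \<Rightarrow> real" where
  "parity_feature s a i = (if i = a mod 2 then 1 else 0)"

definition arm_feature :: "nat \<Rightarrow> nat \<Rightarrow> nat \<Rightarrow> real" where
  "arm_feature s a i =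
     (if a = 2 then (if i = 0 then 1 else 0) else if a = 3 then (if i = 1 then 1 else 0) else 1/2)"

lemma low_rank_bandit_sim:
  "low_rank (bandit_kernel 0) A H 2 parity_feature (\<lambda>h s' i. pmf (coin_pmf (1/2)) s')"
proof (rule low_rank_of_pmf_factors)
  have "a mod 2 = 0 \<or> a mod 2 = 1" for a :: nat by auto
  then show "(\<Sum>i<2. (parity_feature s a i)\<^sup>2) \<le> 1"
    and "pmf (bandit_kernel 0 h s a) s' = (\<Sum>i<2. parity_feature s a i * pmf (coin_pmf (1/2)) s')"
    for h s a s'
    by (auto simp: sum_lessThan_2 parity_feature_def bandit_kernel_def arm_prob_def)
qed

lemma low_rank_bandit_real:
  assumes "\<bar>x\<bar> \<le> 1/2"
  shows "low_rank (bandit_kernel x) A H 2 arm_feature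
           (\<lambda>h s' i. pmf (coin_pmf (if i = 0 then 1/2 + x else 1/2 - x)) s')"
proof (rule low_rank_of_pmf_factors)
  show "(\<Sum>i<2. (arm_feature s a i)\<^sup>2) \<le> 1" for s a
    by (simp add: sum_lessThan_2 arm_feature_def power2_eq_square)
  show "pmf (bandit_kernel x h s a) s' =
      (\<Sum>i<2. arm_feature s a i * pmf (coin_pmf (if i = 0 then 1/2 + x else 1/2 - x)) s')" for h s a s'
    using assms arm_prob_bounds[OF assms, of a]
    by (auto simp: sum_lessThan_2 arm_feature_def bandit_kernel_def arm_prob_def pmf_coin_pmf field_simps)
qed

lemma feat_cov_parity_explore:
  "feat_cov P s1 2 parity_feature explore_policy h = mat 2 2 (\<lambda>(i, j). if i = j then 1/2 else 0)"
proof -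
  have actions: "map_pmf snd (sa_dist P explore_policy s1 h) = pmf_of_set {0, 1}"
    by (simp add: map_bind_pmf map_pmf_comp explore_policy_def)
  have "measure_pmf.prob (sa_dist P explore_policy s1 h) {(s, a). a mod 2 = i} = 1/2" if "i < 2" for i
  proof -
    have "measure_pmf.prob (sa_dist P explore_policy s1 h) {(s, a). a mod 2 = i} =
        measure_pmf.prob (map_pmf snd (sa_dist P explore_policy s1 h)) {a. a mod 2 = i}"
      by (simp add: vimage_def case_prod_unfold del: sa_dist.simps)
    also have "\<dots> = 1/2"
      unfolding actions using that by (auto simp: measure_pmf_of_set less_2_cases_iff)
    finally show ?thesis .
  qed
  then show ?thesis
    unfolding parity_feature_def[abs_def] feat_cov_one_hot by (intro eq_matI) auto
qed

lemma lambda_min_feat_cov_parity_le: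
  "lambda_min (feat_cov P s1 2 parity_feature \<pi> h) \<le> 1"
proof -
  let ?p = "\<lambda>i. measure_pmf.prob (sa_dist P \<pi> s1 h) {(s, a). a mod 2 = i}"
  have "lambda_min (feat_cov P s1 2 parity_feature \<pi> h) = Min (?p ` {..<2})"
    unfolding parity_feature_def[abs_def] feat_cov_one_hot by (rule lambda_min_diagonal) simp
  also have "\<dots> \<le> ?p 0"
    by (rule Min_le) auto
  also have "\<dots> \<le> 1"
    by simp
  finally show ?thesis .
qed

lemma explore_policy_in_policies: "explore_policy \<in> policies {0, 1, 2, 3}"
  by (auto simp: policies_def explore_policy_def)

lemma lambda_min_feat_cov_parity_explore:
  "lambda_min (feat_cov P s1 2 parity_feature explore_policy h) = 1/2"
  by (simp add: feat_cov_parity_explore lambda_min_diagonal image_constant_conv lessThan_empty_iff)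

lemma bandit_reachability:
  "1/2 \<le> (SUP \<pi>\<in>policies {0, 1, 2, 3}. lambda_min (feat_cov P s1 2 parity_feature \<pi> h))"
  using lambda_min_feat_cov_parity_le lambda_min_feat_cov_parity_explore explore_policy_in_policies
  by (intro cSUP_upper2[where x = explore_policy] bdd_aboveI[where M = 1]) auto

definition bandit_fclass :: "real \<Rightarrow> nat \<Rightarrow> (nat \<Rightarrow> nat \<Rightarrow> real) set" where
  "bandit_fclass \<epsilon> h = (if h = 1 then (\<lambda>x s a. arm_prob x a) ` {0, \<epsilon>, -\<epsilon>} else {bandit_reward 2})"

lemma valid_bandit_fclass:
  assumes "\<bar>\<epsilon>\<bar> \<le> 1/2"
  shows "valid_fclass {0, 1, 2, 3} 2 (bandit_fclass \<epsilon>)"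
  using assms
  by (auto simp: valid_fclass_def bandit_fclass_def bandit_reward_def arm_prob_def)

lemma bellman_complete_bandit:
  assumes "\<bar>\<epsilon>\<bar> \<le> 1/2" and "x \<in> {0, \<epsilon>, -\<epsilon>}"
  shows "bellman_complete (bandit_kernel x) bandit_reward {0, 1, 2, 3} 2 (bandit_fclass \<epsilon>)"
  unfolding bellman_complete_def
proof (intro ballI)
  have x: "\<bar>x\<bar> \<le> 1/2"
    using assms by auto
  fix h g
  assume h: "h \<in> {1..2}" and g: "g \<in> fclass_at (bandit_fclass \<epsilon>) 2 (h + 1)"
  consider "h = 1" | "h = 2"
    using h by fastforce
  then show "\<exists>f\<in>bandit_fclass \<epsilon> h. \<forall>s. \<forall>a\<in>{0, 1, 2, 3}.
      f s a = bellman_op (bandit_kernel x) bandit_reward {0, 1, 2, 3} h g s a"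
  proof cases
    case 1
    have "Max ((\<lambda>a'. bandit_reward 2 s' a') ` {0, 1, 2, 3}) = indicator {1} s'" for s'
      by (cases "s' = 1") (simp_all add: bandit_reward_def)
    then have "bellman_op (bandit_kernel x) bandit_reward {0, 1, 2, 3} 1 (bandit_reward 2) s a = arm_prob x a"
      for s a
      using bandit_kernel_hit_prob[OF x]
      by (simp add: bellman_op_def bandit_reward_def del: measure_pmf_single)
    moreover have "g = bandit_reward 2"
      using g 1 by (simp add: fclass_at_def bandit_fclass_def)
    ultimately show ?thesis
      using 1 assms(2) by (auto simp: bandit_fclass_def)
  next
    case 2
    then have "g = (\<lambda>s a. 0)"
      using g by (simp add: fclass_at_def)
    with 2 show ?thesis
      by (auto simp: bandit_fclass_def bellman_op_def)
  qed
qed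

theorem proposition5:
  fixes \<epsilon> :: real
  assumes "0 \<le> \<epsilon>" and "\<epsilon> \<le> 1 / 2"
  shows "\<exists>(A :: nat set) (r :: reward) (s1 :: nat) (H :: nat)
           (Psim :: kernel) (P1 :: kernel) (P2 :: kernel) (d :: nat)
           (F :: nat \<Rightarrow> (nat \<Rightarrow> nat \<Rightarrow> real) set).
     finite A \<and> A \<noteq> {} \<and>
     (\<forall>h s a. 0 \<le> r h s a \<and> r h s a \<le> 1) \<and>
     (\<forall>h\<in>{1..H}. \<forall>s. \<forall>a\<in>A.
        tv_dist (P1 h s a) (Psim h s a) \<le> \<epsilon> \<and> tv_dist (P2 h s a) (Psim h s a) \<le> \<epsilon>) \<and>
     is_low_rank_mdp P1 A H d \<and> is_low_rank_mdp P2 A H d \<and>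
     (\<exists>\<phi>s \<mu>s. low_rank Psim A H d \<phi>s \<mu>s \<and>
        (\<exists>lam_star > 0. \<forall>h\<in>{1..H}.
           (SUP \<pi>\<in>policies A. lambda_min (feat_cov Psim s1 d \<phi>s \<pi> h)) \<ge> lam_star) \<and>
        (\<exists>\<pi>exp\<in>policies A.
           (\<forall>h\<in>{1..H}. lambda_min (feat_cov Psim s1 d \<phi>s \<pi>exp h) = 1 / 2) \<and>
           (\<forall>T::nat. \<forall>rule :: (nat \<times> nat) list list \<Rightarrow> policy.
              (\<forall>D. rule D \<in> policies A) \<longrightarrow>
              max (measure_pmf.expectation (dataset P1 \<pi>exp s1 H T)
                     (\<lambda>D. V0_star P1 r A s1 H - V0 P1 r s1 H (rule D)))
                  (measure_pmf.expectation (dataset P2 \<pi>exp s1 H T)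
                     (\<lambda>D. V0_star P2 r A s1 H - V0 P2 r s1 H (rule D)))
                \<ge> \<epsilon>))) \<and>
     valid_fclass A H F \<and>
     bellman_complete Psim r A H F \<and> bellman_complete P1 r A H F \<and> bellman_complete P2 r A H F"
proof -
  have eps: "\<bar>\<epsilon>\<bar> \<le> 1/2" "\<bar>-\<epsilon>\<bar> \<le> 1/2"
    using assms by auto
  have real_low_rank: "is_low_rank_mdp (bandit_kernel x) {0, 1, 2, 3} 2 2" if "\<bar>x\<bar> \<le> 1/2" for x
    unfolding is_low_rank_mdp_def using low_rank_bandit_real[OF that] by blast
  show ?thesis
    apply (rule exI[of _ "{0, 1, 2, 3}"], rule exI[of _ bandit_reward], rule exI[of _ 0], rule exI[of _ 2],
        rule exI[of _ "bandit_kernel 0"], rule exI[of _ "bandit_kernel \<epsilon>"],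
        rule exI[of _ "bandit_kernel (-\<epsilon>)"], rule exI[of _ 2], rule exI[of _ "bandit_fclass \<epsilon>"])
    \<comment> \<open>the simulator's feature witnesses are the only existentials under the conjunction\<close>
    apply (intro conjI; (rule exI[of _ parity_feature], rule exI[of _ "\<lambda>h s' i. pmf (coin_pmf (1/2)) s'"])?)
    using assms tv_dist_bandit_kernel_le[OF eps(1)] tv_dist_bandit_kernel_le[OF eps(2)]
      real_low_rank[OF eps(1)] real_low_rank[OF eps(2)] bandit_reward_bounds
      low_rank_bandit_sim bandit_reachability explore_policy_in_policies
      lambda_min_feat_cov_parity_explore bandit_regret_lower_bound[OF assms]
      valid_bandit_fclass[OF eps(1)] bellman_complete_bandit[OF eps(1)]
    by (auto intro!: exI[of _ "1/2 :: real"] bexI[of _ explore_policy])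
qed

end
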